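(* Let $(\mathbf X_1,\mathbf Y_1)$ and $(\mathbf X_2,\mathbf Y_2)$ be general correlated sources, both uniformly integrable, with identical marginals $\mathbf X_1=\mathbf X_2$ (i.e. $P_{X_1^n}=P_{X_2^n}$ for all $n$), and let $(\mathbf X,\mathbf Y)$ be their mixture $P_{X^nY^n}=\alpha_1P_{X_1^nY_1^n}+\alpha_2P_{X_2^nY_2^n}$ with $\alpha_1,\alpha_2>0$, $\alpha_1+\alpha_2=1$. If $\overline H_s(\mathbf X_i|\mathbf Y_i)=\overline H(\mathbf X_i|\mathbf Y_i)$ for $i=1,2$, then \[\overline H_s(\mathbf X|\mathbf Y)=\max_{i=1,2}\overline H_s(\mathbf X_i|\mathbf Y_i)=\max_{i=1,2}\overline H(\mathbf X_i|\mathbf Y_i).\]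
   Context: A general correlated source $\{(X^n,Y^n)\}_{n\ge1}$ is an arbitrary sequence of pairs of random variables on $\mathcal X^n\times\mathcal Y^n$, $\mathcal X,\mathcal Y$ finite or countably infinite (no structural assumptions; marginal probabilities positive). Logs base 2. A source is uniformly integrable if $Z_n=\frac1n\log\frac1{P_{X^n|Y^n}(X^n|Y^n)}$ satisfies $\lim_{u\to\infty}\sup_n\sum_{z:|z|\ge u}P_{Z_n}(z)|z|=0$. $\overline H(\mathbf X|\mathbf Y)=\inf\{\alpha:\lim_n\Pr\{Z_n>\alpha\}=0\}$. For a source with distributions $P_{X^nY^n}$, $x^n$ and $\varepsilon\in(0,1]$: $\overline h^\varepsilon(x^n)=\inf\{a\in\mathbb R:\sum_{y^n:\log(1/P_{X^n|Y^n}(x^n|y^n))>a}P_{Y^n|X^n}(y^n|x^n)\le\varepsilon\}$; $\overline H_s^\varepsilon(X^n|Y^n)=\sum_{x^n}P_{X^n}(x^n)\overline h^\varepsilon(x^n)$; $\overline H_s(\mathbf X|\mathbf Y)=\lim_{\varepsilon\downarrow0}\limsup_n\frac1n\overline H_s^\varepsilon(X^n|Y^n)$; these are applied to the mixture and to each component. *)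

theory Defs
  imports "HOL-Probability.Probability"
begin

text \<open>A general correlated source: for each block length n a joint pmf on pairs
  (x^n, y^n), with x^n, y^n represented as lists (of length n) over countable alphabets.\<close>

type_synonym ('a, 'b) source = "nat \<Rightarrow> ('a list \<times> 'b list) pmf"

definition src_wf :: "('a, 'b) source \<Rightarrow> bool" where
  "src_wf P \<longleftrightarrow> (\<forall>n. set_pmf (P n) \<subseteq> {(x, y). length x = n \<and> length y = n})"

definition PX :: "('a, 'b) source \<Rightarrow> nat \<Rightarrow> 'a list \<Rightarrow> real" where
  "PX P n x = pmf (map_pmf fst (P n)) x"

definition PY :: "('a, 'b) source \<Rightarrow> nat \<Rightarrow> 'b list \<Rightarrow> real" where
  "PY P n y = pmf (map_pmf snd (P n)) y"

definition PXgY :: "('a, 'b) source \<Rightarrow> nat \<Rightarrow> 'a list \<Rightarrow> 'b list \<Rightarrow> real" where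
  "PXgY P n x y = pmf (P n) (x, y) / PY P n y"

definition PYgX :: "('a, 'b) source \<Rightarrow> nat \<Rightarrow> 'b list \<Rightarrow> 'a list \<Rightarrow> real" where
  "PYgX P n y x = pmf (P n) (x, y) / PX P n x"

definition Zn :: "('a, 'b) source \<Rightarrow> nat \<Rightarrow> 'a list \<times> 'b list \<Rightarrow> real" where
  "Zn P n xy = (1 / real n) * log 2 (1 / PXgY P n (fst xy) (snd xy))"

definition unif_integrable :: "('a, 'b) source \<Rightarrow> bool" where
  "unif_integrable P \<longleftrightarrow>
     ((\<lambda>u::real. \<Squnion>n\<in>{1..}. \<integral>\<^sup>+ xy. ennreal (\<bar>Zn P n xy\<bar>) * indicator {xy. \<bar>Zn P n xy\<bar> \<ge> u} xy
        \<partial>measure_pmf (P n)) \<longlongrightarrow> 0) at_top"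

definition Hbar :: "('a, 'b) source \<Rightarrow> ennreal" where
  "Hbar P = Inf (ennreal ` {\<alpha>::real.
      ((\<lambda>n. measure_pmf.prob (P n) {xy. Zn P n xy > \<alpha>}) \<longlongrightarrow> 0) sequentially})"

definition hbar_eps :: "('a, 'b) source \<Rightarrow> nat \<Rightarrow> real \<Rightarrow> 'a list \<Rightarrow> real" where
  "hbar_eps P n \<epsilon> x = Inf {a::real.
      (\<integral>\<^sup>+ y. ennreal (PYgX P n y x) * indicator {y. log 2 (1 / PXgY P n x y) > a} y
         \<partial>count_space UNIV) \<le> ennreal \<epsilon>}"

definition Hs_eps :: "('a, 'b) source \<Rightarrow> nat \<Rightarrow> real \<Rightarrow> ennreal" where
  "Hs_eps P n \<epsilon> = (\<integral>\<^sup>+ x. ennreal (hbar_eps P n \<epsilon> x) \<partial>measure_pmf (map_pmf fst (P n)))"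

definition Hs :: "('a, 'b) source \<Rightarrow> ennreal" where
  "Hs P = Lim (at_right (0::real))
     (\<lambda>\<epsilon>. limsup (\<lambda>n. ennreal (1 / real n) * Hs_eps P n \<epsilon>))"

end

theory Submission
  imports Defs
begin

text \<open>
  Write \<open>L(x,y) = log (1 / P(x|y))\<close> for the conditional self-information; then
  \<open>\<overline>h\<^sup>\<epsilon>(x)\<close> is the least level \<open>a\<close> at which the conditional tail \<open>P(L > a | X = x)\<close>
  drops to \<open>\<epsilon>\<close>.

  Lower bound: where \<open>P\<^sub>2 < K P\<^sub>1\<close>, the posterior of the mixture is at most
  \<open>C = (\<alpha>\<^sub>1 + \<alpha>\<^sub>2 K) / \<alpha>\<^sub>1\<close> times that of the first component, so \<open>L \<ge> L\<^sub>1 - log C\<close>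
  there; since both components have the same \<open>X\<close>-marginal, the remaining set has
  conditional \<open>P\<^sub>1\<close>-mass at most \<open>1/K\<close>.  Hence a tail \<open>\<le> \<epsilon>\<close> of the mixture at level \<open>a\<close>
  forces a tail \<open>\<le> \<epsilon>/\<alpha>\<^sub>1 + 1/K\<close> of \<open>P\<^sub>1\<close> at level \<open>a + log C\<close>, and the constant
  \<open>log C\<close> disappears after dividing by \<open>n\<close>.  So \<open>\<overline>H\<^sub>s(X|Y) \<ge> \<overline>H\<^sub>s(X\<^sub>i|Y\<^sub>i)\<close>.

  Upper bound: a Markov-type estimate gives \<open>\<overline>h\<^sup>\<epsilon>(x) \<le> a + E[L; L > a | X = x] / \<epsilon>\<close>,
  so \<open>(1/n) \<overline>H\<^sub>s\<^sup>\<epsilon>\<close> is at most \<open>b + E[Z\<^sub>n; Z\<^sub>n > b] / \<epsilon>\<close>.  Under the \<open>i\<close>-th component,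
  \<open>Z\<^sub>n\<close> exceeds the \<open>Z\<^sub>n\<close> of that component by at most \<open>W\<^sub>n = (1/n) log (P\<^sub>Y / (\<alpha>\<^sub>i P\<^sub>Y\<^sub>i))\<close>,
  whose expectation is at most \<open>1 / (n \<alpha>\<^sub>i ln 2)\<close>.  For \<open>b\<close> above \<open>\<overline>H(X\<^sub>i|Y\<^sub>i)\<close> the
  truncated expectation of the component's \<open>Z\<^sub>n\<close> vanishes by uniform integrability, so
  \<open>\<overline>H\<^sub>s(X|Y) \<le> max\<^sub>i \<overline>H(X\<^sub>i|Y\<^sub>i)\<close>.
\<close>

lemma pmf_mixture_eq_bind:
  fixes M M1 M2 :: "'c pmf" and a b :: real
  assumes "a > 0" "b > 0" "a + b = 1" "\<forall>z. pmf M z = a * pmf M1 z + b * pmf M2 z"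
  shows "M = bind_pmf (bernoulli_pmf a) (\<lambda>c. if c then M1 else M2)"
proof (rule pmf_eqI)
  fix z
  have "b = 1 - a" using assms by simp
  then show "pmf M z = pmf (bind_pmf (bernoulli_pmf a) (\<lambda>c. if c then M1 else M2)) z"
    using assms by (simp add: pmf_bind)
qed

lemma nn_integral_pmf_mixture:
  fixes M M1 M2 :: "'c pmf" and a b :: real
  assumes "a > 0" "b > 0" "a + b = 1" "\<forall>z. pmf M z = a * pmf M1 z + b * pmf M2 z"
  shows "(\<integral>\<^sup>+z. f z \<partial>M) = ennreal a * (\<integral>\<^sup>+z. f z \<partial>M1) + ennreal b * (\<integral>\<^sup>+z. f z \<partial>M2)"
proof -
  have b: "b = 1 - a" using assms by simp
  have "(\<integral>\<^sup>+z. f z \<partial>M) = (\<integral>\<^sup>+z. f z \<partial>bind_pmf (bernoulli_pmf a) (\<lambda>c. if c then M1 else M2))"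
    by (subst pmf_mixture_eq_bind[OF assms]) (rule refl)
  also have "\<dots> = (\<integral>\<^sup>+z. f z \<partial>M1) * ennreal a + (\<integral>\<^sup>+z. f z \<partial>M2) * ennreal (1 - a)"
    using assms by simp
  finally show ?thesis unfolding b by (simp add: mult.commute)
qed

lemma pmf_map_pmf_mixture:
  fixes M M1 M2 :: "'c pmf" and a b :: real
  assumes "a > 0" "b > 0" "a + b = 1" "\<forall>z. pmf M z = a * pmf M1 z + b * pmf M2 z"
  shows "pmf (map_pmf f M) w = a * pmf (map_pmf f M1) w + b * pmf (map_pmf f M2) w"
proof -
  have "b = 1 - a" using assms by simp
  then show ?thesis
    using assms by (subst pmf_mixture_eq_bind[OF assms]) (simp add: map_bind_pmf pmf_bind)
qed

lemma measure_pmf_mixture: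
  fixes M M1 M2 :: "'c pmf" and a b :: real
  assumes "a > 0" "b > 0" "a + b = 1" "\<forall>z. pmf M z = a * pmf M1 z + b * pmf M2 z"
  shows "measure M A = a * measure M1 A + b * measure M2 A"
proof -
  have "emeasure M A = ennreal a * emeasure M1 A + ennreal b * emeasure M2 A"
    using nn_integral_pmf_mixture[OF assms, of "indicator A"] by simp
  then have "ennreal (measure M A) = ennreal (a * measure M1 A) + ennreal (b * measure M2 A)"
    using assms by (simp add: measure_pmf.emeasure_eq_measure ennreal_mult)
  also have "\<dots> = ennreal (a * measure M1 A + b * measure M2 A)"
    using assms by (intro ennreal_plus[symmetric]) auto
  finally show ?thesis using assms by (subst (asm) ennreal_inj) auto
qed

lemma nn_integral_count_space_pmf_Pair:
  fixes M :: "('a \<times> 'b) pmf"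
  shows "(\<integral>\<^sup>+y. ennreal (pmf M (x,y)) * f y \<partial>count_space UNIV)
       = (\<integral>\<^sup>+z. indicator {z. fst z = x} z * f (snd z) \<partial>measure_pmf M)"
proof -
  have "(\<integral>\<^sup>+z. indicator {z. fst z = x} z * f (snd z) \<partial>measure_pmf M)
     = (\<integral>\<^sup>+z. ennreal (pmf M z) * f (snd z) * indicator (range (Pair x)) z \<partial>count_space UNIV)"
    unfolding nn_integral_measure_pmf
    by (intro nn_integral_cong) (auto split: split_indicator simp: image_iff)
  also have "\<dots> = (\<integral>\<^sup>+z. ennreal (pmf M z) * f (snd z) \<partial>count_space (range (Pair x)))"
    by (simp add: nn_integral_count_space_indicator)
  also have "\<dots> = (\<integral>\<^sup>+y. ennreal (pmf M (x,y)) * f y \<partial>count_space UNIV)"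
    by (subst nn_integral_bij_count_space[symmetric, of "Pair x" UNIV])
      (auto simp: bij_betw_def inj_on_def)
  finally show ?thesis ..
qed

lemma nn_integral_pmf_iterated:
  fixes M :: "('a::countable \<times> 'b::countable) pmf"
  shows "(\<integral>\<^sup>+x. \<integral>\<^sup>+y. ennreal (pmf M (x,y)) * f x y \<partial>count_space UNIV \<partial>count_space UNIV)
       = (\<integral>\<^sup>+z. f (fst z) (snd z) \<partial>M)"
proof -
  have "(\<integral>\<^sup>+x. \<integral>\<^sup>+y. ennreal (pmf M (x,y)) * f x y \<partial>count_space UNIV \<partial>count_space UNIV)
      = (\<integral>\<^sup>+x. \<integral>\<^sup>+z. ennreal (pmf M z) * (indicator {z. fst z = x} z * f x (snd z))
           \<partial>count_space UNIV \<partial>count_space UNIV)"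
    by (simp add: nn_integral_count_space_pmf_Pair nn_integral_measure_pmf)
  also have "\<dots> = (\<integral>\<^sup>+z. \<integral>\<^sup>+x. ennreal (pmf M z) * (indicator {z. fst z = x} z * f x (snd z))
           \<partial>count_space UNIV \<partial>count_space UNIV)"
    by (rule nn_integral_count_space_nn_integral[symmetric]) auto
  also have "\<dots> = (\<integral>\<^sup>+z. ennreal (pmf M z) * f (fst z) (snd z) \<partial>count_space UNIV)"
  proof (intro nn_integral_cong)
    fix z :: "'a \<times> 'b"
    have "(\<integral>\<^sup>+x. ennreal (pmf M z) * (indicator {z. fst z = x} z * f x (snd z)) \<partial>count_space UNIV)
        = (\<integral>\<^sup>+x. ennreal (pmf M z) * f x (snd z) * indicator {fst z} x \<partial>count_space UNIV)"
      by (intro nn_integral_cong) (auto split: split_indicator)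
    then show "(\<integral>\<^sup>+x. ennreal (pmf M z) * (indicator {z. fst z = x} z * f x (snd z)) \<partial>count_space UNIV)
        = ennreal (pmf M z) * f (fst z) (snd z)" by simp
  qed
  also have "\<dots> = (\<integral>\<^sup>+z. f (fst z) (snd z) \<partial>M)"
    by (simp add: nn_integral_measure_pmf)
  finally show ?thesis .
qed

lemma measure_pmf_fst_eq: "measure (measure_pmf M) {z. fst z = x} = pmf (map_pmf fst M) x"
  by (simp add: pmf_map vimage_def)

lemma pmf_le_PX: "pmf (P n) (x,y) \<le> PX P n x"
proof -
  have "pmf (P n) (x,y) = measure (P n) {(x,y)}" by (simp add: measure_pmf_single)
  also have "\<dots> \<le> measure (P n) (fst -` {x})"
    by (intro measure_pmf.finite_measure_mono) auto
  finally show ?thesis by (simp add: PX_def pmf_map)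
qed

lemma pmf_le_PY: "pmf (P n) (x,y) \<le> PY P n y"
proof -
  have "pmf (P n) (x,y) = measure (P n) {(x,y)}" by (simp add: measure_pmf_single)
  also have "\<dots> \<le> measure (P n) (snd -` {y})"
    by (intro measure_pmf.finite_measure_mono) auto
  finally show ?thesis by (simp add: PY_def pmf_map)
qed

lemma PX_pos_of_set_pmf: "x \<in> set_pmf (map_pmf fst (P n)) \<Longrightarrow> PX P n x > 0"
  by (simp add: PX_def pmf_positive)

lemma PX_mult_PYgX: "ennreal (PX P n x) * ennreal (PYgX P n y x) = ennreal (pmf (P n) (x,y))"
proof (cases "PX P n x = 0")
  case True
  then have "pmf (P n) (x,y) = 0" using pmf_le_PX[of P n x y] by (simp add: antisym)
  then show ?thesis using True by simp
next
  case False
  then have "PX P n x > 0" by (simp add: PX_def order_less_le)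
  then show ?thesis by (simp add: PYgX_def ennreal_mult'[symmetric] PX_def)
qed

lemma PXgY_nonneg: "0 \<le> PXgY P n x y"
  by (simp add: PXgY_def PY_def)

lemma PXgY_le_1: "PXgY P n x y \<le> 1"
proof (cases "PY P n y = 0")
  case True then show ?thesis by (simp add: PXgY_def)
next
  case False
  then have "PY P n y > 0" by (simp add: PY_def order_less_le)
  then show ?thesis using pmf_le_PY[of P n x y] by (simp add: PXgY_def divide_le_eq_1)
qed

definition self_info :: "('a, 'b) source \<Rightarrow> nat \<Rightarrow> 'a list \<times> 'b list \<Rightarrow> real" where
  "self_info P n z = log 2 (1 / PXgY P n (fst z) (snd z))"

lemma self_info_nonneg: "0 \<le> self_info P n z"
  using PXgY_nonneg[of P n "fst z" "snd z"] PXgY_le_1[of P n "fst z" "snd z"]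
  by (cases "PXgY P n (fst z) (snd z) = 0") (auto simp: self_info_def log_def)

lemma Zn_eq_self_info: "Zn P n z = self_info P n z / real n"
  by (simp add: Zn_def self_info_def)

lemma log_inverse_antimono: "0 < q \<Longrightarrow> q \<le> p \<Longrightarrow> log 2 (1 / p) \<le> log 2 (1 / q)"
  by (simp add: log_divide)

definition cond_tail :: "('a, 'b) source \<Rightarrow> nat \<Rightarrow> 'a list \<Rightarrow> real \<Rightarrow> real" where
  "cond_tail P n x a = measure (P n) {z. fst z = x \<and> self_info P n z > a} / PX P n x"

lemma nn_integral_PYgX_eq_cond_tail:
  "(\<integral>\<^sup>+y. ennreal (PYgX P n y x) * indicator {y. log 2 (1 / PXgY P n x y) > a} y \<partial>count_space UNIV)
   = ennreal (cond_tail P n x a)"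
proof (cases "PX P n x = 0")
  case True
  then show ?thesis by (simp add: PYgX_def cond_tail_def)
next
  case False
  then have q: "PX P n x > 0" by (simp add: PX_def order_less_le)
  let ?A = "{y. log 2 (1 / PXgY P n x y) > a}"
  have "(\<integral>\<^sup>+y. ennreal (PYgX P n y x) * indicator ?A y \<partial>count_space UNIV)
     = (\<integral>\<^sup>+y. ennreal (1 / PX P n x) * (ennreal (pmf (P n) (x,y)) * indicator ?A y) \<partial>count_space UNIV)"
    using q by (intro nn_integral_cong)
      (simp add: PYgX_def ennreal_mult' mult.commute mult.left_commute divide_inverse mult.assoc)
  also have "\<dots> = ennreal (1 / PX P n x) *
      (\<integral>\<^sup>+z. indicator {z. fst z = x} z * indicator ?A (snd z) \<partial>measure_pmf (P n))"
    by (simp add: nn_integral_cmult nn_integral_count_space_pmf_Pair)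
  also have "(\<integral>\<^sup>+z. indicator {z. fst z = x} z * indicator ?A (snd z) \<partial>measure_pmf (P n))
      = (\<integral>\<^sup>+z. indicator {z. fst z = x \<and> self_info P n z > a} z \<partial>measure_pmf (P n))"
    by (intro nn_integral_cong) (auto simp: self_info_def split: split_indicator)
  also have "\<dots> = ennreal (measure (P n) {z. fst z = x \<and> self_info P n z > a})"
    by (simp add: measure_pmf.emeasure_eq_measure)
  finally show ?thesis using q
    by (simp add: cond_tail_def ennreal_mult'[symmetric] divide_inverse mult.commute)
qed

lemma hbar_eps_eq_Inf_cond_tail: "0 \<le> e \<Longrightarrow> hbar_eps P n e x = Inf {a. cond_tail P n x a \<le> e}"
  unfolding hbar_eps_def nn_integral_PYgX_eq_cond_tail
  by (subst ennreal_le_iff) auto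

lemma cond_tail_neg: assumes "PX P n x > 0" "a < 0" shows "cond_tail P n x a = 1"
proof -
  have "{z. fst z = x \<and> self_info P n z > a} = {z. fst z = x}"
    using self_info_nonneg[of P n] assms(2) by (auto intro: less_le_trans)
  then show ?thesis using assms(1) by (simp add: cond_tail_def measure_pmf_fst_eq PX_def)
qed

lemma ex_cond_tail_le: assumes "PX P n x > 0" "e > 0" shows "\<exists>a. cond_tail P n x a \<le> e"
proof -
  define A where "A m = {z. fst z = x \<and> self_info P n z > real m}" for m :: nat
  have "(\<lambda>m. measure (P n) (A m)) \<longlonglongrightarrow> measure (P n) (\<Inter>m. A m)"
    by (rule measure_pmf.finite_Lim_measure_decseq) (auto simp: decseq_def A_def)
  moreover have "(\<Inter>m. A m) = {}"
    by (auto simp: A_def) (meson reals_Archimedean2 order.asym)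
  ultimately have "(\<lambda>m. measure (P n) (A m)) \<longlonglongrightarrow> 0" by simp
  moreover have "e * PX P n x > 0" using assms by simp
  ultimately obtain m where "measure (P n) (A m) < e * PX P n x"
    by (metis (no_types, lifting) eventually_sequentially order_tendstoD(2) order_refl)
  then have "cond_tail P n x (real m) \<le> e" using assms
    by (simp add: cond_tail_def A_def pos_divide_le_eq)
  then show ?thesis by blast
qed

lemma cond_tail_le_imp_nonneg:
  assumes "PX P n x > 0" "e < 1" "cond_tail P n x a \<le> e"
  shows "0 \<le> a"
  using cond_tail_neg[OF assms(1), of a] assms by force

lemma hbar_eps_le:
  assumes "PX P n x > 0" "0 \<le> e" "e < 1" "cond_tail P n x a \<le> e"
  shows "hbar_eps P n e x \<le> a"
  unfolding hbar_eps_eq_Inf_cond_tail[OF assms(2)]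
  by (rule cInf_lower)
    (use assms cond_tail_le_imp_nonneg[OF assms(1,3)] in \<open>auto intro!: bdd_belowI[of _ 0]\<close>)

lemma hbar_eps_ge:
  assumes "PX P n x > 0" "0 < e" "\<And>a. cond_tail P n x a \<le> e \<Longrightarrow> c \<le> a"
  shows "c \<le> hbar_eps P n e x"
  unfolding hbar_eps_eq_Inf_cond_tail[OF order_less_imp_le[OF assms(2)]]
  by (rule cInf_greatest) (use assms ex_cond_tail_le[OF assms(1,2)] in auto)

lemma hbar_eps_nonneg: assumes "PX P n x > 0" "0 < e" "e < 1" shows "0 \<le> hbar_eps P n e x"
  by (rule hbar_eps_ge[OF assms(1,2)]) (rule cond_tail_le_imp_nonneg[OF assms(1,3)])

lemma hbar_eps_antimono:
  assumes "PX P n x > 0" "0 < e1" "e1 \<le> e2" "e2 < 1"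
  shows "hbar_eps P n e2 x \<le> hbar_eps P n e1 x"
  by (rule hbar_eps_ge) (use assms in \<open>auto intro!: hbar_eps_le\<close>)

lemma Hs_eps_antimono:
  assumes "0 < e1" "e1 \<le> e2" "e2 < 1"
  shows "Hs_eps P n e2 \<le> Hs_eps P n e1"
  unfolding Hs_eps_def
  by (intro nn_integral_mono_AE AE_pmfI ennreal_leI hbar_eps_antimono PX_pos_of_set_pmf)
    (use assms in auto)

definition Hs_rate :: "('a, 'b) source \<Rightarrow> real \<Rightarrow> ennreal" where
  "Hs_rate P e = limsup (\<lambda>n. ennreal (1 / real n) * Hs_eps P n e)"

lemma Hs_rate_antimono:
  assumes "0 < e1" "e1 \<le> e2" "e2 < 1"
  shows "Hs_rate P e2 \<le> Hs_rate P e1"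
  unfolding Hs_rate_def
  by (intro Limsup_mono always_eventually allI mult_left_mono Hs_eps_antimono assms) auto

lemma Lim_at_right_0_antimono:
  fixes F :: "real \<Rightarrow> ennreal"
  assumes anti: "\<And>e1 e2. 0 < e1 \<Longrightarrow> e1 \<le> e2 \<Longrightarrow> e2 < 1 \<Longrightarrow> F e2 \<le> F e1"
  shows "Lim (at_right 0) F = (SUP e\<in>{0<..<1}. F e)"
proof (rule tendsto_Lim)
  show "(F \<longlongrightarrow> (SUP e\<in>{0<..<1}. F e)) (at_right 0)"
  proof (rule increasing_tendsto)
    show "\<forall>\<^sub>F e in at_right 0. F e \<le> (SUP e\<in>{0<..<1}. F e)"
      unfolding eventually_at_right[OF zero_less_one]
      by (intro exI[of _ 1]) (auto intro: SUP_upper)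
    fix x assume "x < (SUP e\<in>{0<..<1}. F e)"
    then obtain e0 where e0: "e0 \<in> {0<..<1}" "x < F e0" by (auto simp: less_SUP_iff)
    show "\<forall>\<^sub>F e in at_right 0. x < F e"
      unfolding eventually_at_right[OF zero_less_one]
      using e0 by (intro exI[of _ e0]) (auto intro: less_le_trans[OF _ anti[of _ e0]])
  qed
qed simp

lemma Hs_eq_SUP_Hs_rate: "Hs P = (SUP e\<in>{0<..<1}. Hs_rate P e)"
  unfolding Hs_def Hs_rate_def[symmetric]
  by (rule Lim_at_right_0_antimono) (rule Hs_rate_antimono)

section \<open>A Markov-type upper bound for \<open>\<overline>H\<^sub>s\<^sup>\<epsilon>\<close>\<close>

lemma hbar_eps_le_cond_tail_expectation:
  assumes q: "PX P n x > 0" and e: "0 < e" "e < 1" and a: "a > 0"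
  shows "ennreal (hbar_eps P n e x) \<le> ennreal a + ennreal (1 / e) *
    (\<integral>\<^sup>+y. ennreal (PYgX P n y x) * (ennreal (self_info P n (x,y)) *
       indicator {y. self_info P n (x,y) > a} y) \<partial>count_space UNIV)"
    (is "_ \<le> _ + _ * ?G")
proof (cases ?G)
  case (real g)
  define b where "b = a + g / e"
  \<comment> \<open>Markov's inequality at level \<open>b\<close> bounds the tail by \<open>g / b \<le> \<epsilon>\<close>.\<close>
  have b: "b > 0" "a \<le> b" using a real e by (simp_all add: b_def add_pos_nonneg)
  have "ennreal (cond_tail P n x b)
      = (\<integral>\<^sup>+y. ennreal (PYgX P n y x) * indicator {y. log 2 (1 / PXgY P n x y) > b} y \<partial>count_space UNIV)"
    by (rule nn_integral_PYgX_eq_cond_tail[symmetric])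
  also have "\<dots> \<le> (\<integral>\<^sup>+y. ennreal (1 / b) * (ennreal (PYgX P n y x) * (ennreal (self_info P n (x,y)) *
       indicator {y. self_info P n (x,y) > a} y)) \<partial>count_space UNIV)"
  proof (intro nn_integral_mono)
    fix y
    show "ennreal (PYgX P n y x) * indicator {y. log 2 (1 / PXgY P n x y) > b} y
        \<le> ennreal (1 / b) * (ennreal (PYgX P n y x) * (ennreal (self_info P n (x,y)) *
             indicator {y. self_info P n (x,y) > a} y))"
    proof (cases "self_info P n (x,y) > b")
      case True
      then have "ennreal 1 \<le> ennreal (1 / b) * ennreal (self_info P n (x,y))"
        using b by (simp add: ennreal_mult'[symmetric] ennreal_leI)
      then have "ennreal (PYgX P n y x) * 1
          \<le> ennreal (PYgX P n y x) * (ennreal (1 / b) * ennreal (self_info P n (x,y)))"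
        by (intro mult_left_mono) auto
      then show ?thesis using True b by (simp add: self_info_def mult_ac)
    qed (simp add: self_info_def)
  qed
  also have "\<dots> = ennreal (g / b)"
    using b by (simp add: nn_integral_cmult real ennreal_mult'[symmetric])
  finally have "cond_tail P n x b \<le> g / b"
    using b real by (simp add: ennreal_le_iff)
  also have "g / b \<le> e" using b a e real by (simp add: divide_le_eq b_def algebra_simps)
  finally have "ennreal (hbar_eps P n e x) \<le> ennreal b"
    using q e by (intro ennreal_leI hbar_eps_le) auto
  also have "\<dots> = ennreal a + ennreal (1 / e) * ennreal g"
    using a e real by (simp add: b_def ennreal_plus ennreal_mult'[symmetric])
  finally show ?thesis by (simp add: real)
qed (use e in \<open>simp add: ennreal_mult_top\<close>)

lemma Hs_eps_le_tail_expectation: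
  fixes P :: "('a::countable, 'b::countable) source"
  assumes e: "0 < e" "e < 1" and a: "a > 0"
  shows "Hs_eps P n e \<le> ennreal a + ennreal (1 / e) *
    (\<integral>\<^sup>+z. ennreal (self_info P n z) * indicator {z. self_info P n z > a} z \<partial>P n)"
proof -
  define G where "G x = (\<integral>\<^sup>+y. ennreal (PYgX P n y x) * (ennreal (self_info P n (x,y)) *
    indicator {y. self_info P n (x,y) > a} y) \<partial>count_space UNIV)" for x
  have "Hs_eps P n e \<le> (\<integral>\<^sup>+x. ennreal a + ennreal (1 / e) * G x \<partial>map_pmf fst (P n))"
    unfolding Hs_eps_def G_def
    by (intro nn_integral_mono_AE AE_pmfI hbar_eps_le_cond_tail_expectation PX_pos_of_set_pmf)
      (use e a in auto)
  also have "\<dots> = ennreal a + ennreal (1 / e) * (\<integral>\<^sup>+x. G x \<partial>map_pmf fst (P n))"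
    by (simp add: nn_integral_add nn_integral_cmult measure_pmf.emeasure_space_1)
  also have "(\<integral>\<^sup>+x. G x \<partial>map_pmf fst (P n)) = (\<integral>\<^sup>+x. ennreal (PX P n x) * G x \<partial>count_space UNIV)"
    unfolding PX_def by (rule nn_integral_measure_pmf)
  also have "(\<integral>\<^sup>+x. ennreal (PX P n x) * G x \<partial>count_space UNIV)
      = (\<integral>\<^sup>+x. \<integral>\<^sup>+y. ennreal (pmf (P n) (x,y)) * (ennreal (self_info P n (x,y)) *
           indicator {y. self_info P n (x,y) > a} y) \<partial>count_space UNIV \<partial>count_space UNIV)"
    unfolding G_def
    by (intro nn_integral_cong, subst nn_integral_cmult[symmetric])
      (auto simp: mult.assoc[symmetric] PX_mult_PYgX)
  also have "\<dots> = (\<integral>\<^sup>+z. ennreal (self_info P n z) * indicator {z. self_info P n z > a} z \<partial>P n)"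
    by (subst nn_integral_pmf_iterated) (auto intro!: nn_integral_cong split: split_indicator)
  finally show ?thesis by simp
qed

lemma Hs_eps_rate_le_tail_expectation:
  fixes P :: "('a::countable, 'b::countable) source"
  assumes e: "0 < e" "e < 1" and b: "b > 0" and n: "n > 0"
  shows "ennreal (1 / real n) * Hs_eps P n e \<le> ennreal b + ennreal (1 / e) *
    (\<integral>\<^sup>+z. ennreal (Zn P n z) * indicator {z. Zn P n z > b} z \<partial>P n)"
proof -
  have "ennreal (1 / real n) * Hs_eps P n e \<le> ennreal (1 / real n) * (ennreal (real n * b) +
      ennreal (1 / e) * (\<integral>\<^sup>+z. ennreal (self_info P n z) *
        indicator {z. self_info P n z > real n * b} z \<partial>P n))"
    using n b by (intro mult_left_mono Hs_eps_le_tail_expectation e) auto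
  also have "\<dots> = ennreal b + ennreal (1 / e) * (\<integral>\<^sup>+z. ennreal (1 / real n) *
      (ennreal (self_info P n z) * indicator {z. self_info P n z > real n * b} z) \<partial>P n)"
    using n b by (simp add: distrib_left ennreal_mult'[symmetric] mult_ac nn_integral_cmult)
  also have "(\<integral>\<^sup>+z. ennreal (1 / real n) *
      (ennreal (self_info P n z) * indicator {z. self_info P n z > real n * b} z) \<partial>P n)
      = (\<integral>\<^sup>+z. ennreal (Zn P n z) * indicator {z. Zn P n z > b} z \<partial>P n)"
  proof (intro nn_integral_cong)
    fix z
    have "self_info P n z > real n * b \<longleftrightarrow> Zn P n z > b"
      using n by (simp add: Zn_eq_self_info pos_less_divide_eq mult.commute)
    moreover have "ennreal (1 / real n) * ennreal (self_info P n z) = ennreal (Zn P n z)"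
      using n by (simp add: Zn_eq_self_info ennreal_mult'[symmetric])
    ultimately show "ennreal (1 / real n) * (ennreal (self_info P n z) *
        indicator {z. self_info P n z > real n * b} z) = ennreal (Zn P n z) * indicator {z. Zn P n z > b} z"
      by (auto split: split_indicator simp: mult.assoc[symmetric])
  qed
  finally show ?thesis .
qed

text \<open>If \<open>Z \<le> Z\<^sub>1 + W\<close> exceeds \<open>h + g\<close>, then \<open>Z\<^sub>1 \<ge> u\<close>, or \<open>h < Z\<^sub>1 < u\<close>, or \<open>W > g\<close>
  (and then \<open>u \<le> (u/g) W\<close>); each case is paid for by one summand.\<close>
lemma truncated_sum_bound:
  fixes Z Z1 W u g h :: real
  assumes "Z1 \<ge> 0" "W \<ge> 0" "Z \<le> Z1 + W" "u > 0" "g > 0" "h \<ge> 0"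
  shows "(if Z > h + g then Z else 0)
    \<le> (if Z1 \<ge> u then Z1 else 0) + (if Z1 > h then u else 0) + (u / g + 1) * W"
proof -
  define v where "v = u / g * W"
  have "W > g \<Longrightarrow> u \<le> v"
    using assms mult_left_mono[of g W "u / g"] by (auto simp: v_def)
  moreover have "0 \<le> v" using assms by (simp add: v_def)
  moreover have "(u / g + 1) * W = v + W" by (simp add: v_def algebra_simps)
  ultimately show ?thesis using assms by (auto split: if_splits)
qed

lemma Zn_tail_tendsto_zero_mono:
  fixes P :: "('a, 'b) source"
  assumes "(\<lambda>n. measure (P n) {z. Zn P n z > b}) \<longlonglongrightarrow> 0" "b \<le> h"
  shows "(\<lambda>n. measure (P n) {z. Zn P n z > h}) \<longlonglongrightarrow> 0"
  by (rule tendsto_sandwich[OF _ _ tendsto_const assms(1)])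
    (use assms(2) in \<open>auto intro!: always_eventually measure_pmf.finite_measure_mono\<close>)

lemma unif_integrable_uniform_bound:
  assumes ui: "unif_integrable P" and d: "d > 0"
  obtains u where "u > 0"
    "\<And>n. n \<ge> 1 \<Longrightarrow> (\<integral>\<^sup>+z. ennreal \<bar>Zn P n z\<bar> * indicator {z. \<bar>Zn P n z\<bar> \<ge> u} z \<partial>P n) \<le> ennreal d"
proof -
  let ?E = "\<lambda>u n. \<integral>\<^sup>+z. ennreal \<bar>Zn P n z\<bar> * indicator {z. \<bar>Zn P n z\<bar> \<ge> u} z \<partial>P n"
  have "eventually (\<lambda>u. (\<Squnion>n\<in>{1..}. ?E u n) < ennreal d) at_top"
    using ui d unfolding unif_integrable_def by (intro order_tendstoD(2)) auto
  then obtain U where U: "\<And>u. u \<ge> U \<Longrightarrow> (\<Squnion>n\<in>{1..}. ?E u n) < ennreal d"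
    by (auto simp: eventually_at_top_linorder)
  show ?thesis
  proof
    show "max U 1 > 0" by simp
    show "?E (max U 1) n \<le> ennreal d" if "n \<ge> 1" for n
      using that U[of "max U 1"] by (intro order_trans[OF SUP_upper[of n]] less_imp_le) auto
  qed
qed

locale source_mixture =
  fixes P1 P2 P :: "('a::countable, 'b::countable) source" and a1 a2 :: real
  assumes a1: "a1 > 0" and a2: "a2 > 0" and a12: "a1 + a2 = 1"
    and mix: "\<forall>n xy. pmf (P n) xy = a1 * pmf (P1 n) xy + a2 * pmf (P2 n) xy"
begin

lemma pmf_mix: "\<forall>z. pmf (P n) z = a1 * pmf (P1 n) z + a2 * pmf (P2 n) z"
  using mix by simp

lemma measure_mix: "measure (P n) A = a1 * measure (P1 n) A + a2 * measure (P2 n) A"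
  by (rule measure_pmf_mixture[OF a1 a2 a12 pmf_mix])

lemma PY_mix: "PY P n y = a1 * PY P1 n y + a2 * PY P2 n y"
  unfolding PY_def by (rule pmf_map_pmf_mixture[OF a1 a2 a12 pmf_mix])

lemma PY_first_le: "a1 * PY P1 n y \<le> PY P n y"
  using PY_mix[of n y] a2 by (simp add: PY_def)

lemma pmf_first_le: "a1 * pmf (P1 n) z \<le> pmf (P n) z"
  using spec[OF pmf_mix[of n], of z] a2 by simp

lemma PY_pos_of_pmf_first_pos:
  assumes "pmf (P1 n) z > 0"
  shows "PY P1 n (snd z) > 0" "PY P n (snd z) > 0"
proof -
  show PY1: "PY P1 n (snd z) > 0"
    using assms pmf_le_PY[of P1 n "fst z" "snd z"] by simp
  show "PY P n (snd z) > 0"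
    using PY_first_le[of n "snd z"] mult_pos_pos[OF a1 PY1] by linarith
qed

lemma self_info_le_first:
  assumes z: "pmf (P1 n) z > 0"
  shows "self_info P n z \<le> self_info P1 n z + log 2 (PY P n (snd z) / (a1 * PY P1 n (snd z)))"
proof -
  obtain x y where zxy: "z = (x, y)" by force
  note PY = PY_pos_of_pmf_first_pos[OF z, unfolded zxy snd_conv]
  have q: "a1 * pmf (P1 n) z / PY P n y > 0" using z a1 PY by simp
  moreover have "a1 * pmf (P1 n) z / PY P n y \<le> PXgY P n x y"
    unfolding PXgY_def zxy using pmf_first_le[of n "(x,y)"] PY by (intro divide_right_mono) auto
  ultimately have "self_info P n z \<le> log 2 (1 / (a1 * pmf (P1 n) z / PY P n y))"
    unfolding self_info_def zxy fst_conv snd_conv by (rule log_inverse_antimono)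
  also have "1 / (a1 * pmf (P1 n) z / PY P n y)
      = (PY P1 n y / pmf (P1 n) z) * (PY P n y / (a1 * PY P1 n y))"
    using PY a1 by (simp add: field_simps)
  also have "log 2 \<dots> = log 2 (PY P1 n y / pmf (P1 n) z) + log 2 (PY P n y / (a1 * PY P1 n y))"
    using PY a1 z by (intro log_mult_pos) auto
  also have "log 2 (PY P1 n y / pmf (P1 n) z) = self_info P1 n z"
    by (simp add: self_info_def PXgY_def zxy)
  finally show ?thesis by (simp add: zxy)
qed

lemma self_info_first_le:
  assumes K: "K \<ge> 1" and z: "pmf (P2 n) z < K * pmf (P1 n) z"
  shows "self_info P1 n z - log 2 ((a1 + a2 * K) / a1) \<le> self_info P n z"
proof -
  obtain x y where zxy: "z = (x, y)" by force
  define C where "C = (a1 + a2 * K) / a1"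
  have "0 < K * pmf (P1 n) z" using z pmf_nonneg[of "P2 n" z] by linarith
  then have p1: "pmf (P1 n) z > 0" using K by (simp add: zero_less_mult_iff)
  note PY = PY_pos_of_pmf_first_pos[OF p1, unfolded zxy snd_conv]
  have C: "C > 0" using a1 a2 K unfolding C_def by (intro divide_pos_pos add_pos_nonneg) auto
  have "pmf (P n) z \<le> (a1 + a2 * K) * pmf (P1 n) z"
    using spec[OF pmf_mix[of n], of z] z a2 by (simp add: algebra_simps)
  then have "PXgY P n x y \<le> (a1 + a2 * K) * pmf (P1 n) z / (a1 * PY P1 n y)"
    unfolding PXgY_def zxy using PY_first_le[of n y] PY a1 a2 K
    by (intro frac_le) (auto simp: zxy)
  also have "\<dots> = C * PXgY P1 n x y" using a1 by (simp add: PXgY_def zxy C_def field_simps)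
  finally have le: "PXgY P n x y \<le> C * PXgY P1 n x y" .
  have "0 < a1 * pmf (P1 n) z" using a1 p1 by simp
  then have pos: "PXgY P n x y > 0"
    using pmf_first_le[of n z] PY by (simp add: PXgY_def zxy)
  have "log 2 (1 / (C * PXgY P1 n x y)) = log 2 (1 / PXgY P1 n x y) - log 2 C"
    using C PY p1 by (simp add: PXgY_def zxy log_divide log_mult)
  then have "self_info P1 n z - log 2 C = log 2 (1 / (C * PXgY P1 n x y))"
    by (simp add: self_info_def zxy)
  also have "\<dots> \<le> self_info P n z"
    unfolding self_info_def zxy fst_conv snd_conv by (rule log_inverse_antimono[OF pos le])
  finally show ?thesis by (simp add: C_def)
qed

definition Zn_excess :: "nat \<Rightarrow> 'a list \<times> 'b list \<Rightarrow> real" where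
  "Zn_excess n z = log 2 (PY P n (snd z) / (a1 * PY P1 n (snd z))) / real n"

lemma Zn_le_Zn_first_plus_excess:
  assumes "pmf (P1 n) z > 0"
  shows "Zn P n z \<le> Zn P1 n z + Zn_excess n z"
  using self_info_le_first[OF assms]
  by (simp add: Zn_eq_self_info Zn_excess_def add_divide_distrib[symmetric] divide_right_mono)

lemma Zn_excess_nonneg:
  assumes "pmf (P1 n) z > 0"
  shows "0 \<le> Zn_excess n z"
proof -
  have "a1 * PY P1 n (snd z) > 0" using PY_pos_of_pmf_first_pos(1)[OF assms] a1 by simp
  then have "1 \<le> PY P n (snd z) / (a1 * PY P1 n (snd z))" using PY_first_le by simp
  then show ?thesis by (simp add: Zn_excess_def)
qed

lemma nn_integral_Zn_excess_le:
  assumes n: "n > 0"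
  shows "(\<integral>\<^sup>+z. ennreal (Zn_excess n z) \<partial>P1 n) \<le> ennreal (1 / (real n * a1 * ln 2))"
proof -
  define c where "c = 1 / (real n * a1 * ln 2)"
  have c: "c > 0" using n a1 by (simp add: c_def)
  have "(\<integral>\<^sup>+z. ennreal (Zn_excess n z) \<partial>P1 n)
      \<le> (\<integral>\<^sup>+z. ennreal c * ennreal (PY P n (snd z) / PY P1 n (snd z)) \<partial>P1 n)"
  proof (intro nn_integral_mono_AE AE_pmfI)
    fix z assume "z \<in> set_pmf (P1 n)"
    then have z: "pmf (P1 n) z > 0" by (simp add: pmf_positive)
    define t where "t = PY P n (snd z) / (a1 * PY P1 n (snd z))"
    have t: "t > 0" using PY_pos_of_pmf_first_pos[OF z] a1 by (simp add: t_def)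
    \<comment> \<open>\<open>log t \<le> t / ln 2\<close>, from \<open>ln t \<le> t - 1\<close>\<close>
    have "Zn_excess n z = ln t / ln 2 / real n" by (simp add: Zn_excess_def t_def log_def)
    also have "\<dots> \<le> t / ln 2 / real n"
      using t ln_le_minus_one[of t] by (intro divide_right_mono) auto
    also have "\<dots> = c * (PY P n (snd z) / PY P1 n (snd z))"
      using a1 by (simp add: t_def c_def field_simps)
    finally show "ennreal (Zn_excess n z) \<le> ennreal c * ennreal (PY P n (snd z) / PY P1 n (snd z))"
      using c by (simp add: ennreal_mult'[symmetric] ennreal_leI)
  qed
  also have "\<dots> = ennreal c * (\<integral>\<^sup>+y. ennreal (PY P n y / PY P1 n y) \<partial>map_pmf snd (P1 n))"
    by (simp add: nn_integral_cmult)
  also have "(\<integral>\<^sup>+y. ennreal (PY P n y / PY P1 n y) \<partial>map_pmf snd (P1 n))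
      = (\<integral>\<^sup>+y. ennreal (PY P1 n y) * ennreal (PY P n y / PY P1 n y) \<partial>count_space UNIV)"
    unfolding PY_def by (rule nn_integral_measure_pmf)
  also have "(\<integral>\<^sup>+y. ennreal (PY P1 n y) * ennreal (PY P n y / PY P1 n y) \<partial>count_space UNIV)
      \<le> (\<integral>\<^sup>+y. ennreal (PY P n y) \<partial>count_space UNIV)"
    by (intro nn_integral_mono)
      (auto simp: ennreal_mult'[symmetric] PY_def intro!: ennreal_leI)
  also have "\<dots> = 1"
    unfolding PY_def by (simp add: nn_integral_pmf measure_pmf.emeasure_space_1[simplified])
  finally show ?thesis by (simp add: c_def mult_left_mono)
qed

end

lemma source_mixture_swap: "source_mixture P1 P2 P a1 a2 \<Longrightarrow> source_mixture P2 P1 P a2 a1"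
  unfolding source_mixture_def by (auto simp: add.commute)

section \<open>Upper bound via uniform integrability\<close>

context source_mixture begin

lemma truncated_Zn_le:
  assumes z: "pmf (P1 n) z > 0" and u: "u > 0" and g: "g > 0" and h: "h \<ge> 0"
  shows "ennreal (Zn P n z) * indicator {z. Zn P n z > h + g} z
    \<le> ennreal \<bar>Zn P1 n z\<bar> * indicator {z. \<bar>Zn P1 n z\<bar> \<ge> u} z
      + ennreal u * indicator {z. Zn P1 n z > h} z + ennreal (u / g + 1) * ennreal (Zn_excess n z)"
proof -
  have Z1: "Zn P1 n z \<ge> 0" using self_info_nonneg[of P1 n z] by (simp add: Zn_eq_self_info)
  note W = Zn_excess_nonneg[OF z]
  have "ennreal (Zn P n z) * indicator {z. Zn P n z > h + g} z
      = ennreal (if Zn P n z > h + g then Zn P n z else 0)"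
    by (simp split: split_indicator)
  also have "\<dots> \<le> ennreal ((if Zn P1 n z \<ge> u then Zn P1 n z else 0)
      + (if Zn P1 n z > h then u else 0) + (u / g + 1) * Zn_excess n z)"
    by (intro ennreal_leI truncated_sum_bound Z1 W Zn_le_Zn_first_plus_excess z u g h)
  also have "\<dots> = ennreal \<bar>Zn P1 n z\<bar> * indicator {z. \<bar>Zn P1 n z\<bar> \<ge> u} z
      + ennreal u * indicator {z. Zn P1 n z > h} z + ennreal (u / g + 1) * ennreal (Zn_excess n z)"
  proof -
    have "ennreal (u / g + 1) * ennreal (Zn_excess n z) = ennreal ((u / g + 1) * Zn_excess n z)"
      using u g by (intro ennreal_mult'[symmetric]) simp
    moreover have "0 \<le> (u / g + 1) * Zn_excess n z" using u g W by simp
    ultimately show ?thesis using Z1 u by (simp add: ennreal_plus split: split_indicator)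
  qed
  finally show ?thesis .
qed

lemma truncated_Zn_vanishes:
  assumes ui: "unif_integrable P1"
    and tail: "(\<lambda>n. measure (P1 n) {z. Zn P1 n z > h}) \<longlonglongrightarrow> 0"
    and h: "h \<ge> 0" and g: "g > 0" and d: "d > 0"
  shows "eventually (\<lambda>n. (\<integral>\<^sup>+z. ennreal (Zn P n z) * indicator {z. Zn P n z > h + g} z \<partial>P1 n)
    \<le> ennreal d) sequentially"
proof -
  define E where "E u n = (\<integral>\<^sup>+z. ennreal \<bar>Zn P1 n z\<bar> * indicator {z. \<bar>Zn P1 n z\<bar> \<ge> u} z
    \<partial>measure_pmf (P1 n))" for u :: real and n
  obtain u where u: "u > 0" and E: "\<And>n. n \<ge> 1 \<Longrightarrow> E u n \<le> ennreal (d / 3)"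
    using unif_integrable_uniform_bound[OF ui, of "d / 3"] d unfolding E_def by auto
  have "eventually (\<lambda>n. measure (P1 n) {z. Zn P1 n z > h} < d / 3 / u) sequentially"
    using tail d u by (intro order_tendstoD(2)) auto
  moreover have "eventually (\<lambda>n. (u / g + 1) / (a1 * ln 2) / real n < d / 3) sequentially"
    by (rule order_tendstoD(2)[OF lim_const_over_n]) (use d in simp)
  ultimately show ?thesis
    using eventually_ge_at_top[of "1::nat"]
  proof eventually_elim
    case (elim n)
    have "(\<integral>\<^sup>+z. ennreal (Zn P n z) * indicator {z. Zn P n z > h + g} z \<partial>P1 n)
        \<le> (\<integral>\<^sup>+z. ennreal \<bar>Zn P1 n z\<bar> * indicator {z. \<bar>Zn P1 n z\<bar> \<ge> u} z
          + ennreal u * indicator {z. Zn P1 n z > h} z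
          + ennreal (u / g + 1) * ennreal (Zn_excess n z) \<partial>P1 n)"
      by (intro nn_integral_mono_AE AE_pmfI truncated_Zn_le u g h) (simp add: pmf_positive)
    also have "\<dots> = E u n + ennreal u * ennreal (measure (P1 n) {z. Zn P1 n z > h})
        + ennreal (u / g + 1) * (\<integral>\<^sup>+z. ennreal (Zn_excess n z) \<partial>P1 n)"
      by (simp add: nn_integral_add nn_integral_cmult E_def measure_pmf.emeasure_eq_measure)
    also have "\<dots> \<le> ennreal (d / 3) + ennreal (d / 3) + ennreal (d / 3)"
    proof (intro add_mono)
      show "E u n \<le> ennreal (d / 3)" using E elim by simp
      show "ennreal u * ennreal (measure (P1 n) {z. Zn P1 n z > h}) \<le> ennreal (d / 3)"
        using elim u by (simp add: ennreal_mult'[symmetric] pos_less_divide_eq mult.commute ennreal_leI)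
      have "ennreal (u / g + 1) * (\<integral>\<^sup>+z. ennreal (Zn_excess n z) \<partial>P1 n)
          \<le> ennreal (u / g + 1) * ennreal (1 / (real n * a1 * ln 2))"
        using elim by (intro mult_left_mono nn_integral_Zn_excess_le) auto
      also have "\<dots> = ennreal ((u / g + 1) / (a1 * ln 2) / real n)"
        using u g by (simp add: ennreal_mult'[symmetric] field_simps)
      also have "\<dots> \<le> ennreal (d / 3)" using elim by (intro ennreal_leI) simp
      finally show "ennreal (u / g + 1) * (\<integral>\<^sup>+z. ennreal (Zn_excess n z) \<partial>P1 n) \<le> ennreal (d / 3)" .
    qed
    also have "\<dots> = ennreal d" using d by (simp flip: ennreal_plus)
    finally show ?case .
  qed
qed

lemma Hs_rate_le:
  assumes ui1: "unif_integrable P1" and ui2: "unif_integrable P2"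
    and tail1: "(\<lambda>n. measure (P1 n) {z. Zn P1 n z > h}) \<longlonglongrightarrow> 0"
    and tail2: "(\<lambda>n. measure (P2 n) {z. Zn P2 n z > h}) \<longlonglongrightarrow> 0"
    and h: "h \<ge> 0" and e: "0 < e" "e < 1"
  shows "Hs_rate P e \<le> ennreal h"
proof (rule ennreal_le_epsilon)
  interpret swap: source_mixture P2 P1 P a2 a1
    by (rule source_mixture_swap) (rule source_mixture_axioms)
  fix d :: real assume d: "0 < d"
  define g where "g = d / 2"
  have g: "g > 0" "e * g > 0" using d e by (simp_all add: g_def)
  let ?T = "\<lambda>z n. ennreal (Zn P n z) * indicator {z. Zn P n z > h + g} z"
  have "Hs_rate P e \<le> ennreal (h + d)"
    unfolding Hs_rate_def
  proof (rule Limsup_bounded)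
    show "\<forall>\<^sub>F n in sequentially. ennreal (1 / real n) * Hs_eps P n e \<le> ennreal (h + d)"
      using truncated_Zn_vanishes[OF ui1 tail1 h g] swap.truncated_Zn_vanishes[OF ui2 tail2 h g]
        eventually_ge_at_top[of "1::nat"]
    proof eventually_elim
      case (elim n)
      have "ennreal (1 / real n) * Hs_eps P n e \<le> ennreal (h + g) + ennreal (1 / e) * (\<integral>\<^sup>+z. ?T z n \<partial>P n)"
        using elim h g e by (intro Hs_eps_rate_le_tail_expectation) auto
      also have "(\<integral>\<^sup>+z. ?T z n \<partial>P n)
          = ennreal a1 * (\<integral>\<^sup>+z. ?T z n \<partial>P1 n) + ennreal a2 * (\<integral>\<^sup>+z. ?T z n \<partial>P2 n)"
        by (rule nn_integral_pmf_mixture[OF a1 a2 a12 pmf_mix])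
      also have "\<dots> \<le> ennreal a1 * ennreal (e * g) + ennreal a2 * ennreal (e * g)"
        using elim by (intro add_mono mult_left_mono) auto
      also have "\<dots> = ennreal (e * g)"
        using a1 a2 a12 by (simp flip: distrib_right ennreal_plus)
      also have "ennreal (h + g) + ennreal (1 / e) * ennreal (e * g) = ennreal (h + d)"
        using h g e by (simp flip: ennreal_plus ennreal_mult' add: g_def)
      finally show ?case by (simp add: mult_left_mono)
    qed
  qed
  then show "Hs_rate P e \<le> ennreal h + ennreal d" using h d by (simp add: ennreal_plus)
qed

lemma Hs_le_max_Hbar:
  assumes ui1: "unif_integrable P1" and ui2: "unif_integrable P2"
  shows "Hs P \<le> max (Hbar P1) (Hbar P2)"
  unfolding Hs_eq_SUP_Hs_rate
proof (rule SUP_least, rule ccontr)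
  fix e :: real assume e: "e \<in> {0<..<1}" and "\<not> Hs_rate P e \<le> max (Hbar P1) (Hbar P2)"
  then have "Hbar P1 < Hs_rate P e" "Hbar P2 < Hs_rate P e" by (simp_all add: not_le)
  then obtain b1 b2
    where b1: "(\<lambda>n. measure (P1 n) {z. Zn P1 n z > b1}) \<longlonglongrightarrow> 0" "ennreal b1 < Hs_rate P e"
      and b2: "(\<lambda>n. measure (P2 n) {z. Zn P2 n z > b2}) \<longlonglongrightarrow> 0" "ennreal b2 < Hs_rate P e"
    unfolding Hbar_def by (auto simp: Inf_less_iff)
  define h where "h = max (max b1 b2) 0"
  have "Hs_rate P e \<le> ennreal h"
    using e by (intro Hs_rate_le ui1 ui2 Zn_tail_tendsto_zero_mono[OF b1(1)]
        Zn_tail_tendsto_zero_mono[OF b2(1)]) (auto simp: h_def)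
  also have "ennreal h = max (ennreal b1) (ennreal b2)"
    unfolding h_def by (metis ennreal_max_0 max.commute max_of_mono ennreal_leI monoI)
  also have "\<dots> < Hs_rate P e" using b1(2) b2(2) by simp
  finally show False by simp
qed

end

section \<open>Lower bound for components with a common \<open>X\<close>-marginal\<close>

locale source_mixture_common_marginal = source_mixture +
  assumes marg: "\<forall>n. map_pmf fst (P1 n) = map_pmf fst (P2 n)"
begin

lemma PX_mix_first: "PX P n x = PX P1 n x"
  using pmf_map_pmf_mixture[OF a1 a2 a12 pmf_mix, where f=fst and w=x] marg a12
  by (simp add: PX_def) (metis distrib_right mult_1)

lemma PX_mix_second: "PX P n x = PX P2 n x"
  using PX_mix_first[of n x] marg by (simp add: PX_def)

lemma map_pmf_fst_mix: "map_pmf fst (P n) = map_pmf fst (P1 n)"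
  by (rule pmf_eqI) (use PX_mix_first in \<open>simp add: PX_def\<close>)

lemma measure_ratio_ge_le_PX:
  assumes K: "K \<ge> 1"
  shows "K * measure (P1 n) {z. fst z = x \<and> K * pmf (P1 n) z \<le> pmf (P2 n) z} \<le> PX P n x"
proof -
  define B where "B = {z. fst z = x \<and> K * pmf (P1 n) z \<le> pmf (P2 n) z}"
  have "ennreal K * emeasure (P1 n) B = (\<integral>\<^sup>+z. ennreal K * ennreal (pmf (P1 n) z) \<partial>count_space B)"
    by (simp add: nn_integral_pmf[symmetric] nn_integral_cmult)
  also have "\<dots> \<le> (\<integral>\<^sup>+z. ennreal (pmf (P2 n) z) \<partial>count_space B)"
    using K by (intro nn_integral_mono) (auto simp: B_def ennreal_mult'[symmetric] intro!: ennreal_leI)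
  also have "\<dots> = emeasure (P2 n) B" by (simp add: nn_integral_pmf)
  finally have "ennreal (K * measure (P1 n) B) \<le> ennreal (measure (P2 n) B)"
    using K by (simp add: measure_pmf.emeasure_eq_measure ennreal_mult)
  then have "K * measure (P1 n) B \<le> measure (P2 n) B" by (simp add: ennreal_le_iff)
  also have "\<dots> \<le> measure (P2 n) {z. fst z = x}"
    by (intro measure_pmf.finite_measure_mono) (auto simp: B_def)
  also have "\<dots> = PX P n x" using PX_mix_second[of n x] by (simp add: measure_pmf_fst_eq PX_def)
  finally show ?thesis by (simp add: B_def)
qed

lemma cond_tail_first_le:
  assumes q: "PX P n x > 0" and K: "K \<ge> 1" and tail: "cond_tail P n x a \<le> e"
  shows "cond_tail P1 n x (a + log 2 ((a1 + a2 * K) / a1)) \<le> e / a1 + 1 / K"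
proof -
  define c where "c = log 2 ((a1 + a2 * K) / a1)"
  define A where "A = {z. fst z = x \<and> self_info P n z > a}"
  define B where "B = {z. fst z = x \<and> K * pmf (P1 n) z \<le> pmf (P2 n) z}"
  have "{z. fst z = x \<and> self_info P1 n z > a + c} \<subseteq> A \<union> B"
    using self_info_first_le[OF K] by (force simp: A_def B_def c_def not_le)
  then have "measure (P1 n) {z. fst z = x \<and> self_info P1 n z > a + c} \<le> measure (P1 n) A + measure (P1 n) B"
    by (intro order_trans[OF measure_pmf.finite_measure_mono measure_Un_le]) auto
  moreover have "a1 * measure (P1 n) A \<le> e * PX P n x"
    using measure_mix[of n A] a2 tail q
    by (simp add: cond_tail_def A_def pos_divide_le_eq) (smt (verit) measure_nonneg mult_nonneg_nonneg)
  then have "measure (P1 n) A \<le> e * PX P n x / a1"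
    using a1 by (simp add: pos_le_divide_eq mult.commute)
  moreover have "measure (P1 n) B \<le> PX P n x / K"
    using measure_ratio_ge_le_PX[OF K] K by (simp add: B_def pos_le_divide_eq mult.commute)
  moreover have "PX P n x * (e / a1 + 1 / K) = e * PX P n x / a1 + PX P n x / K"
    by (simp add: field_simps)
  ultimately have "measure (P1 n) {z. fst z = x \<and> self_info P1 n z > a + c} \<le> PX P n x * (e / a1 + 1 / K)"
    by linarith
  then show ?thesis
    using q by (simp add: cond_tail_def PX_mix_first[symmetric] pos_divide_le_eq mult.commute c_def)
qed

lemma hbar_eps_first_le:
  assumes q: "PX P n x > 0" and e: "0 < e" and K: "K \<ge> 1" and e1: "e / a1 + 1 / K < 1"
  shows "hbar_eps P1 n (e / a1 + 1 / K) x - log 2 ((a1 + a2 * K) / a1) \<le> hbar_eps P n e x"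
proof (rule hbar_eps_ge[OF q e])
  fix a assume "cond_tail P n x a \<le> e"
  then have "hbar_eps P1 n (e / a1 + 1 / K) x \<le> a + log 2 ((a1 + a2 * K) / a1)"
    using q e e1 a1 K by (intro hbar_eps_le cond_tail_first_le) (auto simp: PX_mix_first[symmetric])
  then show "hbar_eps P1 n (e / a1 + 1 / K) x - log 2 ((a1 + a2 * K) / a1) \<le> a" by simp
qed

lemma Hs_eps_first_le:
  assumes e: "0 < e" and K: "K \<ge> 1" and e1: "e / a1 + 1 / K < 1"
  shows "Hs_eps P1 n (e / a1 + 1 / K) \<le> Hs_eps P n e + ennreal (log 2 ((a1 + a2 * K) / a1))"
proof -
  define c where "c = log 2 ((a1 + a2 * K) / a1)"
  have "1 \<le> (a1 + a2 * K) / a1" using a1 a2 K by simp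
  then have c: "c \<ge> 0" unfolding c_def by simp
  have "e < 1" using e1 a1 a12 a2 K
    by (smt (verit) divide_pos_pos le_divide_eq_1_pos)
  have "Hs_eps P1 n (e / a1 + 1 / K)
      = (\<integral>\<^sup>+x. ennreal (hbar_eps P1 n (e / a1 + 1 / K) x) \<partial>map_pmf fst (P n))"
    by (simp add: Hs_eps_def map_pmf_fst_mix)
  also have "\<dots> \<le> (\<integral>\<^sup>+x. ennreal (hbar_eps P n e x) + ennreal c \<partial>map_pmf fst (P n))"
  proof (intro nn_integral_mono_AE AE_pmfI)
    fix x assume "x \<in> set_pmf (map_pmf fst (P n))"
    then have q: "PX P n x > 0" by (rule PX_pos_of_set_pmf)
    have "ennreal (hbar_eps P1 n (e / a1 + 1 / K) x) \<le> ennreal (hbar_eps P n e x + c)"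
      using hbar_eps_first_le[OF q e K e1] by (intro ennreal_leI) (simp add: c_def)
    also have "\<dots> = ennreal (hbar_eps P n e x) + ennreal c"
      using hbar_eps_nonneg[OF q e \<open>e < 1\<close>] c by (simp add: ennreal_plus)
    finally show "ennreal (hbar_eps P1 n (e / a1 + 1 / K) x) \<le> ennreal (hbar_eps P n e x) + ennreal c" .
  qed
  also have "\<dots> = Hs_eps P n e + ennreal c"
    by (simp add: nn_integral_add Hs_eps_def measure_pmf.emeasure_space_1)
  finally show ?thesis by (simp add: c_def)
qed

lemma Hs_rate_first_le:
  assumes e: "0 < e" and K: "K \<ge> 1" and e1: "e / a1 + 1 / K < 1"
  shows "Hs_rate P1 (e / a1 + 1 / K) \<le> Hs_rate P e"
proof (rule ennreal_le_epsilon)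
  fix d :: real assume d: "0 < d"
  define c where "c = log 2 ((a1 + a2 * K) / a1)"
  have "Hs_rate P1 (e / a1 + 1 / K) \<le> limsup (\<lambda>n. ennreal d + ennreal (1 / real n) * Hs_eps P n e)"
    unfolding Hs_rate_def
  proof (intro Limsup_mono eventually_sequentiallyI)
    fix n :: nat assume n: "n \<ge> nat \<lceil>c / d\<rceil> + 1"
    then have "real n > 0" "c / d \<le> real n" by linarith+
    then have "c / real n \<le> d" using d by (simp add: divide_le_eq mult.commute)
    then have "ennreal (1 / real n) * Hs_eps P1 n (e / a1 + 1 / K)
        \<le> ennreal (1 / real n) * Hs_eps P n e + ennreal (1 / real n) * ennreal c"
      using Hs_eps_first_le[OF e K e1, of n] by (simp flip: c_def distrib_left add: mult_left_mono)
    also have "\<dots> \<le> ennreal (1 / real n) * Hs_eps P n e + ennreal d"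
      using \<open>real n > 0\<close> \<open>c / real n \<le> d\<close>
      by (intro add_left_mono) (simp add: ennreal_mult'[symmetric] ennreal_leI)
    finally show "ennreal (1 / real n) * Hs_eps P1 n (e / a1 + 1 / K)
        \<le> ennreal d + ennreal (1 / real n) * Hs_eps P n e" by (simp add: add.commute)
  qed
  also have "\<dots> = ennreal d + Hs_rate P e"
    unfolding Hs_rate_def by (rule Limsup_const_add) simp
  finally show "Hs_rate P1 (e / a1 + 1 / K) \<le> Hs_rate P e + ennreal d" by (simp add: add.commute)
qed

lemma Hs_first_le: "Hs P1 \<le> Hs P"
  unfolding Hs_eq_SUP_Hs_rate
proof (rule SUP_least)
  fix e' :: real assume e': "e' \<in> {0<..<1}"
  have "a1 * e' \<le> e'" using e' a1 a2 a12 by (intro mult_left_le_one_le) auto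
  moreover have "0 < a1 * e'" using e' a1 by simp
  ultimately have "a1 * e' / 2 \<in> {0<..<1}" using e' by simp
  moreover have "Hs_rate P1 e' \<le> Hs_rate P (a1 * e' / 2)"
    using Hs_rate_first_le[of "a1 * e' / 2" "2 / e'"] e' a1 by simp
  ultimately show "Hs_rate P1 e' \<le> (SUP e\<in>{0<..<1}. Hs_rate P e)"
    by (auto intro: order_trans[OF _ SUP_upper])
qed

end

theorem corollary3:
  fixes P1 P2 P :: "('a::countable, 'b::countable) source"
    and \<alpha>1 \<alpha>2 :: real
  assumes wf1: "src_wf P1" and wf2: "src_wf P2"
    and ui1: "unif_integrable P1" and ui2: "unif_integrable P2"
    and marg: "\<forall>n. map_pmf fst (P1 n) = map_pmf fst (P2 n)"
    and a1: "\<alpha>1 > 0" and a2: "\<alpha>2 > 0" and a12: "\<alpha>1 + \<alpha>2 = 1"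
    and mix: "\<forall>n xy. pmf (P n) xy = \<alpha>1 * pmf (P1 n) xy + \<alpha>2 * pmf (P2 n) xy"
    and eq1: "Hs P1 = Hbar P1" and eq2: "Hs P2 = Hbar P2"
  shows "Hs P = max (Hs P1) (Hs P2) \<and> max (Hs P1) (Hs P2) = max (Hbar P1) (Hbar P2)"
proof -
  interpret m1: source_mixture_common_marginal P1 P2 P \<alpha>1 \<alpha>2
    using marg a1 a2 a12 mix by unfold_locales auto
  interpret m2: source_mixture_common_marginal P2 P1 P \<alpha>2 \<alpha>1
    using marg a1 a2 a12 mix by unfold_locales (auto simp: add.commute)
  have "max (Hs P1) (Hs P2) \<le> Hs P" using m1.Hs_first_le m2.Hs_first_le by simp
  moreover have "Hs P \<le> max (Hbar P1) (Hbar P2)" by (rule m1.Hs_le_max_Hbar[OF ui1 ui2])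
  ultimately show ?thesis using eq1 eq2 by (simp add: antisym)
qed

end
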